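(* Let $p>2$ be an integer, $\theta\in(0,1)$, $\bm D_0\in\mathbb O(n)$, let $\bm X\in\mathbb R^{n\times r}$ have i.i.d. $\mathcal{BG}(\theta)$ entries, and $\bm Y=\bm D_0\bm X$. Then the set of global maximizers of $\bm A\mapsto\mathbb E_{\bm Y}\|\bm A\bm Y\|_p^p$ over $\bm A\in\mathbb O(n)$ is exactly $\{\bm A:\ \bm A^*=\bm D_0\bm\Pi,\ \bm\Pi\in\mathrm{SP}(n)\}$.
   Context: $\mathcal{BG}(\theta)$ (Bernoulli–Gaussian) is the law of $x=b\cdot g$ with $b\sim\mathrm{Ber}(\theta)$ and $g\sim\mathcal N(0,1)$ independent. $\mathbb O(n)$ is the group of real $n\times n$ orthogonal matrices; $\mathrm{SP}(n)$ is the group of signed permutation matrices. For a matrix $\bm M$, $\|\bm M\|_p^p=\sum_{i,j}|M_{ij}|^p$; $\bm A^*$ denotes the transpose. *)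

theory Defs
  imports "HOL-Probability.Probability"
begin

definition std_gaussian :: "real measure" where
  "std_gaussian = density lborel std_normal_density"

definition BG :: "real \<Rightarrow> real measure" where
  "BG \<theta> = distr (measure_pmf (bernoulli_pmf \<theta>) \<Otimes>\<^sub>M std_gaussian) borel
              (\<lambda>(b, g). (if b then 1 else 0) * g)"

definition BG_matrix :: "real \<Rightarrow> ('n::finite \<times> 'r::finite \<Rightarrow> real) measure" where
  "BG_matrix \<theta> = PiM UNIV (\<lambda>_. BG \<theta>)"

definition to_mat :: "('n::finite \<times> 'r::finite \<Rightarrow> real) \<Rightarrow> real^'r^'n" where
  "to_mat x = (\<chi> i j. x (i, j))"

definition entry_pnorm_pow :: "nat \<Rightarrow> real^'m::finite^'n::finite \<Rightarrow> real" where
  "entry_pnorm_pow p M = (\<Sum>i\<in>UNIV. \<Sum>j\<in>UNIV. \<bar>M $ i $ j\<bar> ^ p)"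

definition signed_perm_matrices :: "(real^'n::finite^'n) set" where
  "signed_perm_matrices = {P. \<exists>\<sigma> s. \<sigma> permutes (UNIV::'n set) \<and> (\<forall>j. s j = 1 \<or> s j = -1) \<and>
       P = (\<chi> i j. if i = \<sigma> j then s j else 0)}"

definition objective :: "nat \<Rightarrow> real \<Rightarrow> real^'n::finite^'n \<Rightarrow> real^'n^'n \<Rightarrow> ('r::finite) itself \<Rightarrow> real" where
  "objective p \<theta> D0 A _ = (\<integral>X. entry_pnorm_pow p (A ** (D0 ** (to_mat X :: real^'r^'n)))
       \<partial>(BG_matrix \<theta> :: ('n \<times> 'r \<Rightarrow> real) measure))"

end

theory Submission
  imports Defs
begin

text \<open>Write \<open>W = A D0\<close>, so that \<open>A Y = W X\<close>. Each entry of \<open>W X\<close> is a linear form \<open>\<langle>w, x\<rangle>\<close> in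
  i.i.d.\ BG(\<open>\<theta>\<close>) variables; given the support \<open>S\<close> of the Bernoulli factors it is Gaussian
  with variance \<open>\<parallel>w\<^sub>S\<parallel>\<^sup>2\<close>, so \<open>E |\<langle>w, x\<rangle>|\<^sup>p = E |g|\<^sup>p \<Sum>\<^sub>S P(S) \<parallel>w\<^sub>S\<parallel>\<^sup>p\<close>. For a row \<open>w\<close> of the
  orthogonal matrix \<open>W\<close> we have \<open>\<parallel>w\<^sub>S\<parallel> \<le> 1\<close>, hence \<open>\<parallel>w\<^sub>S\<parallel>\<^sup>p \<le> \<parallel>w\<^sub>S\<parallel>\<^sup>2\<close> for \<open>p > 2\<close>, with
  equality iff \<open>\<parallel>w\<^sub>S\<parallel> \<in> {0, 1}\<close>; and \<open>\<Sum>\<^sub>S P(S) \<parallel>w\<^sub>S\<parallel>\<^sup>2 = \<theta>\<close>. So over orthogonal \<open>A\<close> the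
  objective is at most \<open>n r \<theta> E |g|\<^sup>p\<close>, attained at \<open>A = D0\<^sup>*\<close>, and attained exactly when every
  entry of \<open>W\<close> lies in \<open>{0, \<plusminus>1}\<close>, i.e.\ when \<open>W\<^sup>*\<close> is a signed permutation.\<close>

lemma prob_space_std_gaussian: "prob_space std_gaussian"
  unfolding std_gaussian_def by (rule prob_space_normal_density) simp

lemma sets_std_gaussian [measurable_cong, simp]: "sets std_gaussian = sets borel"
  by (simp add: std_gaussian_def)

lemma space_std_gaussian [simp]: "space std_gaussian = UNIV"
  by (simp add: std_gaussian_def)

lemma emeasure_std_gaussian_UNIV [simp]: "emeasure std_gaussian UNIV = 1"
proof -
  interpret prob_space std_gaussian by (rule prob_space_std_gaussian)
  show ?thesis using emeasure_space_1 by simp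
qed

lemma distributed_std_gaussian_scaled:
  assumes "\<alpha> \<noteq> 0"
  shows "distributed std_gaussian lborel (\<lambda>g. \<alpha> * g) (normal_density 0 \<bar>\<alpha>\<bar>)"
proof -
  interpret prob_space std_gaussian by (rule prob_space_std_gaussian)
  have "distributed std_gaussian lborel (\<lambda>g. g) std_normal_density"
    by (auto simp: distributed_def std_gaussian_def distr_id2)
  from normal_density_affine[OF this, of \<alpha> 0] assms show ?thesis by simp
qed

lemma nn_integral_std_gaussian_scale:
  fixes h :: "real \<Rightarrow> ennreal"
  assumes "\<alpha> \<noteq> 0" and [measurable]: "h \<in> borel_measurable borel"
  shows "(\<integral>\<^sup>+g. h (\<alpha> * g) \<partial>std_gaussian) = (\<integral>\<^sup>+x. normal_density 0 \<bar>\<alpha>\<bar> x * h x \<partial>lborel)"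
  using distributed_nn_integral[OF distributed_std_gaussian_scaled[OF assms(1)], of h] by simp

lemma nn_integral_std_gaussian_abs_scale:
  fixes h :: "real \<Rightarrow> ennreal"
  assumes [measurable]: "h \<in> borel_measurable borel"
  shows "(\<integral>\<^sup>+g. h (\<alpha> * g) \<partial>std_gaussian) = (\<integral>\<^sup>+g. h (\<bar>\<alpha>\<bar> * g) \<partial>std_gaussian)"
  by (cases "\<alpha> = 0") (simp_all add: nn_integral_std_gaussian_scale)

lemma distr_fst_std_gaussian_pair:
  "distr (std_gaussian \<Otimes>\<^sub>M std_gaussian) borel fst = std_gaussian"
proof -
  interpret G: prob_space std_gaussian by (rule prob_space_std_gaussian)
  show ?thesis
    using G.distr_pair_fst[of std_gaussian] by (subst distr_cong[of _ _ borel std_gaussian]) auto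
qed

lemma distr_snd_std_gaussian_pair:
  "distr (std_gaussian \<Otimes>\<^sub>M std_gaussian) borel snd = std_gaussian"
proof -
  let ?G = std_gaussian
  let ?M = "?G \<Otimes>\<^sub>M ?G"
  interpret G: prob_space ?G by (rule prob_space_std_gaussian)
  have "distr ?M ?G snd = ?G"
  proof (rule measure_eqI)
    fix A assume A: "A \<in> sets (distr ?M ?G snd)"
    then have "emeasure (distr ?M ?G snd) A = emeasure ?M (space ?G \<times> A)"
      by (auto simp: emeasure_distr space_pair_measure dest: sets.sets_into_space
          intro!: arg_cong2[where f=emeasure])
    with A show "emeasure (distr ?M ?G snd) A = emeasure ?G A"
      using G.emeasure_pair_measure_Times[of UNIV ?G A] G.emeasure_space_1 by simp
  qed simp
  then show ?thesis
    by (subst distr_cong[of ?M ?M borel ?G]) auto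
qed

lemma indep_var_fst_snd_std_gaussian:
  "prob_space.indep_var (std_gaussian \<Otimes>\<^sub>M std_gaussian) borel fst borel snd"
proof -
  interpret GG: pair_prob_space std_gaussian std_gaussian
    by (simp add: pair_prob_space_def pair_sigma_finite_def prob_space_std_gaussian
        prob_space_imp_sigma_finite)
  have "distr (std_gaussian \<Otimes>\<^sub>M std_gaussian) (borel \<Otimes>\<^sub>M borel) (\<lambda>z. z)
      = std_gaussian \<Otimes>\<^sub>M std_gaussian"
    by (rule distr_id2) (rule sets_pair_measure_cong; simp)
  then show ?thesis
    by (subst GG.indep_var_distribution_eq)
      (simp add: distr_fst_std_gaussian_pair distr_snd_std_gaussian_pair)
qed

lemma nn_integral_std_gaussian_sum_nonzero:
  fixes h :: "real \<Rightarrow> ennreal"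
  assumes "a \<noteq> 0" "s \<noteq> 0" and [measurable]: "h \<in> borel_measurable borel"
  shows "(\<integral>\<^sup>+y. \<integral>\<^sup>+g. h (a * y + s * g) \<partial>std_gaussian \<partial>std_gaussian)
       = (\<integral>\<^sup>+g. h (sqrt (a\<^sup>2 + s\<^sup>2) * g) \<partial>std_gaussian)"
proof -
  let ?G = std_gaussian
  let ?M = "?G \<Otimes>\<^sub>M ?G"
  interpret G: prob_space ?G by (rule prob_space_std_gaussian)
  interpret GG: pair_prob_space ?G ?G by unfold_locales
  have marginal: "distributed ?M lborel (\<lambda>z. c * f z) (normal_density 0 \<bar>c\<bar>)"
    if "c \<noteq> 0" "f = fst \<or> f = snd" for c and f :: "real \<times> real \<Rightarrow> real"
  proof -
    have "distr ?M lborel f = distr ?M borel f"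
      by (rule distr_cong) auto
    then have "distributed ?M lborel f std_normal_density"
      using that(2) distr_fst_std_gaussian_pair distr_snd_std_gaussian_pair
      by (auto simp: distributed_def std_gaussian_def)
    from GG.normal_density_affine[OF this, of c 0] that(1) show ?thesis by simp
  qed
  have "prob_space.indep_var ?M borel (\<lambda>z. a * fst z) borel (\<lambda>z. s * snd z)"
    using GG.indep_var_compose[OF indep_var_fst_snd_std_gaussian, of "(*) a" borel "(*) s" borel]
    by (simp add: o_def)
  from GG.add_indep_normal[OF this _ _ marginal marginal] assms
  have sum: "distributed ?M lborel (\<lambda>z. a * fst z + s * snd z) (normal_density 0 (sqrt (a\<^sup>2 + s\<^sup>2)))"
    by simp
  have "(\<integral>\<^sup>+y. \<integral>\<^sup>+g. h (a * y + s * g) \<partial>?G \<partial>?G) = (\<integral>\<^sup>+z. h (a * fst z + s * snd z) \<partial>?M)"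
    by (subst G.nn_integral_fst[symmetric]) auto
  also have "\<dots> = (\<integral>\<^sup>+x. normal_density 0 (sqrt (a\<^sup>2 + s\<^sup>2)) x * h x \<partial>lborel)"
    using distributed_nn_integral[OF sum, of h] by simp
  also have "\<dots> = (\<integral>\<^sup>+g. h (sqrt (a\<^sup>2 + s\<^sup>2) * g) \<partial>?G)"
    using assms by (subst nn_integral_std_gaussian_scale) auto
  finally show ?thesis .
qed

lemma nn_integral_std_gaussian_sum:
  fixes h :: "real \<Rightarrow> ennreal"
  assumes [measurable]: "h \<in> borel_measurable borel"
  shows "(\<integral>\<^sup>+y. \<integral>\<^sup>+g. h (a * y + s * g) \<partial>std_gaussian \<partial>std_gaussian)
       = (\<integral>\<^sup>+g. h (sqrt (a\<^sup>2 + s\<^sup>2) * g) \<partial>std_gaussian)"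
proof (cases "a = 0 \<or> s = 0")
  case True
  then show ?thesis
    by (auto simp: nn_integral_std_gaussian_abs_scale[of h a] nn_integral_std_gaussian_abs_scale[of h s])
next
  case False
  then show ?thesis by (simp add: nn_integral_std_gaussian_sum_nonzero)
qed

lemma borel_measurable_nn_integral_std_gaussian [measurable]:
  fixes h :: "real \<Rightarrow> ennreal"
  assumes [measurable]: "h \<in> borel_measurable borel"
  shows "(\<lambda>y. \<integral>\<^sup>+g. h (a * y + s * g) \<partial>std_gaussian) \<in> borel_measurable borel"
proof -
  interpret G: prob_space std_gaussian by (rule prob_space_std_gaussian)
  have "(\<lambda>y. \<integral>\<^sup>+g. (\<lambda>(y, g). h (a * y + s * g)) (y, g) \<partial>std_gaussian) \<in> borel_measurable borel"
    by (rule G.borel_measurable_nn_integral_fst) measurable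
  then show ?thesis by simp
qed

lemma sets_BG [measurable_cong, simp]: "sets (BG \<theta>) = sets borel"
  by (simp add: BG_def)

lemma prob_space_BG:
  assumes "0 \<le> \<theta>" "\<theta> \<le> 1"
  shows "prob_space (BG \<theta>)"
proof -
  interpret G: prob_space std_gaussian by (rule prob_space_std_gaussian)
  interpret B: prob_space "measure_pmf (bernoulli_pmf \<theta>)" by (rule prob_space_measure_pmf)
  interpret BG: pair_prob_space "measure_pmf (bernoulli_pmf \<theta>)" std_gaussian ..
  show ?thesis unfolding BG_def by (rule BG.prob_space_distr) measurable
qed

lemma nn_integral_BG:
  fixes f :: "real \<Rightarrow> ennreal"
  assumes "0 \<le> \<theta>" "\<theta> \<le> 1" and [measurable]: "f \<in> borel_measurable borel"
  shows "(\<integral>\<^sup>+y. f y \<partial>BG \<theta>) = ennreal \<theta> * (\<integral>\<^sup>+g. f g \<partial>std_gaussian) + ennreal (1 - \<theta>) * f 0"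
proof -
  let ?B = "measure_pmf (bernoulli_pmf \<theta>)"
  interpret G: prob_space std_gaussian by (rule prob_space_std_gaussian)
  have "(\<integral>\<^sup>+y. f y \<partial>BG \<theta>) = (\<integral>\<^sup>+z. f ((if fst z then 1 else 0) * snd z) \<partial>(?B \<Otimes>\<^sub>M std_gaussian))"
    unfolding BG_def by (subst nn_integral_distr) (auto simp: case_prod_beta)
  also have "\<dots> = (\<integral>\<^sup>+b. \<integral>\<^sup>+g. f ((if b then 1 else 0) * g) \<partial>std_gaussian \<partial>?B)"
    by (subst G.nn_integral_fst[symmetric]) auto
  also have "\<dots> = (\<Sum>b\<in>UNIV. (\<integral>\<^sup>+g. f ((if b then 1 else 0) * g) \<partial>std_gaussian) * pmf (bernoulli_pmf \<theta>) b)"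
    by (rule nn_integral_measure_pmf_support) auto
  also have "\<dots> = ennreal \<theta> * (\<integral>\<^sup>+g. f g \<partial>std_gaussian) + ennreal (1 - \<theta>) * f 0"
    using assms by (simp add: UNIV_bool mult.commute)
  finally show ?thesis .
qed

lemma nn_integral_BG_std_gaussian_sum:
  fixes h :: "real \<Rightarrow> ennreal"
  assumes "0 \<le> \<theta>" "\<theta> \<le> 1" and [measurable]: "h \<in> borel_measurable borel"
  shows "(\<integral>\<^sup>+y. \<integral>\<^sup>+g. h (a * y + s * g) \<partial>std_gaussian \<partial>BG \<theta>)
       = ennreal \<theta> * (\<integral>\<^sup>+g. h (sqrt (a\<^sup>2 + s\<^sup>2) * g) \<partial>std_gaussian)
         + ennreal (1 - \<theta>) * (\<integral>\<^sup>+g. h (s * g) \<partial>std_gaussian)"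
  using assms by (simp add: nn_integral_BG nn_integral_std_gaussian_sum)

text \<open>With \<open>c = 1 - a\<close>, \<open>support_weight a c I S\<close> is the probability that an i.i.d.\ Bernoulli(\<open>a\<close>)
  vector indexed by \<open>I\<close> has support exactly \<open>S\<close>.\<close>

definition support_weight :: "'b::comm_semiring_1 \<Rightarrow> 'b \<Rightarrow> 'a set \<Rightarrow> 'a set \<Rightarrow> 'b" where
  "support_weight a c I S = a ^ card S * c ^ card (I - S)"

lemma sum_support_weight:
  assumes "finite I"
  shows "(\<Sum>S\<in>Pow I. support_weight a c I S) = (a + c) ^ card I"
  using prod_add[OF assms, of "\<lambda>_. a" "\<lambda>_. c"] by (simp add: support_weight_def)

lemma sum_Pow_insert_support_weight:
  fixes F :: "'a set \<Rightarrow> 'b::comm_semiring_1"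
  assumes "finite I" "i \<notin> I"
  shows "(\<Sum>S\<in>Pow (insert i I). support_weight a c (insert i I) S * F S)
       = (\<Sum>S\<in>Pow I. support_weight a c I S * (a * F (insert i S) + c * F S))"
proof -
  have weight_out: "support_weight a c (insert i I) S = c * support_weight a c I S"
    and weight_in: "support_weight a c (insert i I) (insert i S) = a * support_weight a c I S"
    if "S \<subseteq> I" for S
  proof -
    have "finite S" "i \<notin> S" using that assms finite_subset by auto
    moreover have "insert i I - S = insert i (I - S)" "insert i I - insert i S = I - S"
      using that assms by auto
    ultimately show "support_weight a c (insert i I) S = c * support_weight a c I S"
      "support_weight a c (insert i I) (insert i S) = a * support_weight a c I S"
      using assms by (simp_all add: support_weight_def mult_ac)
  qed
  have "inj_on (insert i) (Pow I)"
    using assms by (auto simp: inj_on_def)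
  then have "(\<Sum>S\<in>Pow (insert i I). support_weight a c (insert i I) S * F S)
      = (\<Sum>S\<in>Pow I. support_weight a c (insert i I) S * F S)
        + (\<Sum>S\<in>Pow I. support_weight a c (insert i I) (insert i S) * F (insert i S))"
    unfolding Pow_insert using assms
    by (subst sum.union_disjoint) (auto simp: sum.reindex)
  also have "\<dots> = (\<Sum>S\<in>Pow I. support_weight a c I S * (a * F (insert i S) + c * F S))"
    by (simp add: weight_out weight_in sum.distrib[symmetric] algebra_simps)
  finally show ?thesis .
qed

lemma sum_support_weight_mult_sum:
  fixes u :: "'a \<Rightarrow> 'b::comm_semiring_1"
  assumes "finite I" "a + c = 1"
  shows "(\<Sum>S\<in>Pow I. support_weight a c I S * (\<Sum>k\<in>S. u k)) = a * (\<Sum>k\<in>I. u k)"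
  using assms(1)
proof (induction I rule: finite_induct)
  case empty
  then show ?case by (simp add: support_weight_def)
next
  case (insert i I)
  have "a * (\<Sum>k\<in>insert i S. u k) + c * (\<Sum>k\<in>S. u k) = (\<Sum>k\<in>S. u k) + a * u i"
    if "S \<in> Pow I" for S
  proof -
    have "finite S" "i \<notin> S" using that insert.hyps finite_subset by auto
    then have "a * (\<Sum>k\<in>insert i S. u k) + c * (\<Sum>k\<in>S. u k) = (a + c) * (\<Sum>k\<in>S. u k) + a * u i"
      by (simp add: algebra_simps)
    then show ?thesis using assms(2) by simp
  qed
  then have "(\<Sum>S\<in>Pow (insert i I). support_weight a c (insert i I) S * (\<Sum>k\<in>S. u k))
      = (\<Sum>S\<in>Pow I. support_weight a c I S * ((\<Sum>k\<in>S. u k) + a * u i))"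
    by (simp add: sum_Pow_insert_support_weight[OF insert.hyps])
  also have "\<dots> = (\<Sum>S\<in>Pow I. support_weight a c I S * (\<Sum>k\<in>S. u k))
      + a * u i * (\<Sum>S\<in>Pow I. support_weight a c I S)"
    by (simp add: distrib_left sum.distrib sum_distrib_left mult_ac)
  also have "\<dots> = a * (\<Sum>k\<in>insert i I. u k)"
    using insert sum_support_weight[OF insert.hyps(1), of a c] assms(2)
    by (simp add: algebra_simps)
  finally show ?case .
qed

lemma ennreal_support_weight:
  assumes "0 \<le> a" "0 \<le> c"
  shows "ennreal (support_weight a c I S) = support_weight (ennreal a) (ennreal c) I S"
  using assms by (simp add: support_weight_def ennreal_mult ennreal_power)

lemma support_weight_nonneg:
  fixes a c :: "'b::linordered_semidom"
  assumes "0 \<le> a" "0 \<le> c"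
  shows "0 \<le> support_weight a c I S"
  using assms by (simp add: support_weight_def)

lemma support_weight_pos:
  fixes a c :: "'b::linordered_semidom"
  assumes "0 < a" "0 < c"
  shows "0 < support_weight a c I S"
  using assms by (simp add: support_weight_def)

text \<open>A linear form in i.i.d.\ BG(\<open>\<theta>\<close>) variables is, conditionally on the support \<open>S\<close> of the
  Bernoulli factors, Gaussian with standard deviation \<open>L2_set w S\<close>.\<close>

lemma nn_integral_BG_linear_form:
  fixes w :: "'a \<Rightarrow> real" and h :: "real \<Rightarrow> ennreal"
  assumes "finite I" "0 \<le> \<theta>" "\<theta> \<le> 1" and "h \<in> borel_measurable borel"
  shows "(\<integral>\<^sup>+x. h (\<Sum>k\<in>I. w k * x k) \<partial>PiM I (\<lambda>_. BG \<theta>))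
       = (\<Sum>S\<in>Pow I. support_weight (ennreal \<theta>) (ennreal (1 - \<theta>)) I S
                        * (\<integral>\<^sup>+g. h (L2_set w S * g) \<partial>std_gaussian))"
proof -
  interpret product_prob_space "\<lambda>_::'a. BG \<theta>"
    by (simp add: product_prob_space_def product_sigma_finite_def product_prob_space_axioms_def
        prob_space_imp_sigma_finite prob_space_BG assms)
  show ?thesis
    using assms(1,4)
  proof (induction I arbitrary: h rule: finite_induct)
    case empty
    then show ?case by (simp add: PiM_empty support_weight_def)
  next
    case (insert i I)
    note [measurable] = insert.prems
    let ?sw = "support_weight (ennreal \<theta>) (ennreal (1 - \<theta>)) I"
    let ?E = "\<lambda>S. \<integral>\<^sup>+g. h (L2_set w S * g) \<partial>std_gaussian"
    have "(\<integral>\<^sup>+x. h (\<Sum>k\<in>insert i I. w k * x k) \<partial>PiM (insert i I) (\<lambda>_. BG \<theta>))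
        = (\<integral>\<^sup>+y. \<integral>\<^sup>+x. h (\<Sum>k\<in>insert i I. w k * (x(i := y)) k) \<partial>PiM I (\<lambda>_. BG \<theta>) \<partial>BG \<theta>)"
      using insert.hyps by (subst product_nn_integral_insert_rev) auto
    also have "\<dots> = (\<integral>\<^sup>+y. \<integral>\<^sup>+x. h (w i * y + (\<Sum>k\<in>I. w k * x k)) \<partial>PiM I (\<lambda>_. BG \<theta>) \<partial>BG \<theta>)"
    proof -
      have "(\<Sum>k\<in>I. w k * (x(i := y)) k) = (\<Sum>k\<in>I. w k * x k)" for x y
        using insert.hyps by (intro sum.cong) auto
      with insert.hyps show ?thesis by simp
    qed
    also have "\<dots> = (\<integral>\<^sup>+y. (\<Sum>S\<in>Pow I. ?sw S * (\<integral>\<^sup>+g. h (w i * y + L2_set w S * g) \<partial>std_gaussian)) \<partial>BG \<theta>)"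
      by (subst insert.IH) auto
    also have "\<dots> = (\<Sum>S\<in>Pow I. ?sw S * (\<integral>\<^sup>+y. \<integral>\<^sup>+g. h (w i * y + L2_set w S * g) \<partial>std_gaussian \<partial>BG \<theta>))"
      by (subst nn_integral_sum) (auto intro!: sum.cong nn_integral_cmult)
    also have "\<dots> = (\<Sum>S\<in>Pow I. ?sw S * (ennreal \<theta> * ?E (insert i S) + ennreal (1 - \<theta>) * ?E S))"
    proof (rule sum.cong[OF refl])
      fix S assume "S \<in> Pow I"
      then have "finite S" "i \<notin> S" using insert.hyps finite_subset by auto
      then show "?sw S * (\<integral>\<^sup>+y. \<integral>\<^sup>+g. h (w i * y + L2_set w S * g) \<partial>std_gaussian \<partial>BG \<theta>)
          = ?sw S * (ennreal \<theta> * ?E (insert i S) + ennreal (1 - \<theta>) * ?E S)"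
        using assms by (simp add: nn_integral_BG_std_gaussian_sum)
    qed
    also have "\<dots> = (\<Sum>S\<in>Pow (insert i I). support_weight (ennreal \<theta>) (ennreal (1 - \<theta>)) (insert i I) S * ?E S)"
      by (rule sum_Pow_insert_support_weight[OF insert.hyps, symmetric])
    finally show ?case .
  qed
qed

definition gauss_abs_moment :: "nat \<Rightarrow> real" where
  "gauss_abs_moment p = (\<integral>x. \<bar>x\<bar> ^ p \<partial>std_gaussian)"

lemma gauss_abs_moment_pos: "0 < gauss_abs_moment p"
proof (cases "even p")
  case True
  then obtain k where "p = 2 * k" by blast
  then show ?thesis
    using std_normal_distribution_even_moments_abs[of k]
    by (simp add: gauss_abs_moment_def std_gaussian_def)
next
  case False
  then obtain k where "p = 2 * k + 1" by (metis oddE)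
  then show ?thesis
    using std_normal_distribution_odd_moments_abs[of k]
    by (simp add: gauss_abs_moment_def std_gaussian_def)
qed

lemma nn_integral_std_gaussian_abs_power:
  assumes "0 \<le> \<sigma>"
  shows "(\<integral>\<^sup>+g. ennreal (\<bar>\<sigma> * g\<bar> ^ p) \<partial>std_gaussian) = ennreal (\<sigma> ^ p * gauss_abs_moment p)"
proof -
  have "integrable std_gaussian (\<lambda>x. \<bar>x\<bar> ^ p)"
    unfolding std_gaussian_def
    by (subst integrable_density) (auto simp: integrable_std_normal_moment_abs)
  then have "(\<integral>\<^sup>+g. ennreal (\<bar>g\<bar> ^ p) \<partial>std_gaussian) = ennreal (gauss_abs_moment p)"
    unfolding gauss_abs_moment_def by (rule nn_integral_eq_integral) simp
  moreover have "(\<integral>\<^sup>+g. ennreal (\<bar>\<sigma> * g\<bar> ^ p) \<partial>std_gaussian)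
      = ennreal (\<sigma> ^ p) * (\<integral>\<^sup>+g. ennreal (\<bar>g\<bar> ^ p) \<partial>std_gaussian)"
    using assms by (simp add: abs_mult power_mult_distrib ennreal_mult nn_integral_cmult)
  ultimately show ?thesis
    using assms gauss_abs_moment_pos[of p] by (simp add: ennreal_mult)
qed

definition sparse_moment :: "real \<Rightarrow> nat \<Rightarrow> ('a::finite \<Rightarrow> real) \<Rightarrow> real" where
  "sparse_moment \<theta> p w = (\<Sum>S\<in>Pow UNIV. support_weight \<theta> (1 - \<theta>) UNIV S * L2_set w S ^ p)"

lemma sparse_moment_nonneg:
  assumes "0 \<le> \<theta>" "\<theta> \<le> 1"
  shows "0 \<le> sparse_moment \<theta> p w"
  using assms unfolding sparse_moment_def
  by (intro sum_nonneg mult_nonneg_nonneg support_weight_nonneg) auto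

lemma nn_integral_BG_abs_power:
  fixes w :: "'a::finite \<Rightarrow> real"
  assumes "0 \<le> \<theta>" "\<theta> \<le> 1"
  shows "(\<integral>\<^sup>+x. ennreal (\<bar>\<Sum>k\<in>UNIV. w k * x k\<bar> ^ p) \<partial>PiM UNIV (\<lambda>_. BG \<theta>))
       = ennreal (gauss_abs_moment p * sparse_moment \<theta> p w)"
proof -
  have "(\<integral>\<^sup>+x. ennreal (\<bar>\<Sum>k\<in>UNIV. w k * x k\<bar> ^ p) \<partial>PiM UNIV (\<lambda>_. BG \<theta>))
      = (\<Sum>S\<in>Pow UNIV. ennreal (support_weight \<theta> (1 - \<theta>) UNIV S)
            * (\<integral>\<^sup>+g. ennreal (\<bar>L2_set w S * g\<bar> ^ p) \<partial>std_gaussian))"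
    using assms by (subst nn_integral_BG_linear_form) (simp_all add: ennreal_support_weight)
  also have "\<dots> = (\<Sum>S\<in>Pow UNIV. ennreal (gauss_abs_moment p * (support_weight \<theta> (1 - \<theta>) UNIV S * L2_set w S ^ p)))"
  proof (rule sum.cong[OF refl])
    fix S :: "'a set"
    have "0 \<le> support_weight \<theta> (1 - \<theta>) UNIV S"
      using assms by (simp add: support_weight_nonneg)
    moreover have "(\<integral>\<^sup>+g. ennreal (\<bar>L2_set w S * g\<bar> ^ p) \<partial>std_gaussian)
        = ennreal (L2_set w S ^ p * gauss_abs_moment p)"
      by (rule nn_integral_std_gaussian_abs_power) simp
    ultimately show "ennreal (support_weight \<theta> (1 - \<theta>) UNIV S)
        * (\<integral>\<^sup>+g. ennreal (\<bar>L2_set w S * g\<bar> ^ p) \<partial>std_gaussian)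
      = ennreal (gauss_abs_moment p * (support_weight \<theta> (1 - \<theta>) UNIV S * L2_set w S ^ p))"
      using gauss_abs_moment_pos[of p] by (simp add: ennreal_mult[symmetric] mult_ac)
  qed
  also have "\<dots> = ennreal (gauss_abs_moment p * sparse_moment \<theta> p w)"
    using assms gauss_abs_moment_pos[of p]
    by (subst sum_ennreal) (auto simp: sparse_moment_def sum_distrib_left support_weight_nonneg)
  finally show ?thesis .
qed

lemma power_eq_power2_iff:
  fixes x :: real
  assumes "0 \<le> x" "x \<le> 1" "2 < p"
  shows "x ^ p = x\<^sup>2 \<longleftrightarrow> x = 0 \<or> x = 1"
proof
  assume eq: "x ^ p = x\<^sup>2"
  show "x = 0 \<or> x = 1"
  proof (rule ccontr)
    assume "\<not> (x = 0 \<or> x = 1)"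
    with assms have "x ^ p < x\<^sup>2" by (intro power_strict_decreasing) auto
    with eq show False by simp
  qed
qed (use assms in auto)

lemma L2_set_le_1:
  fixes w :: "'a::finite \<Rightarrow> real"
  assumes "(\<Sum>k\<in>UNIV. (w k)\<^sup>2) = 1"
  shows "L2_set w S \<le> 1"
  using sum_mono2[of UNIV S "\<lambda>k. (w k)\<^sup>2"] assms by (simp add: L2_set_def)

lemma L2_set_power_le_power2:
  fixes w :: "'a::finite \<Rightarrow> real"
  assumes "(\<Sum>k\<in>UNIV. (w k)\<^sup>2) = 1" "2 \<le> p"
  shows "L2_set w S ^ p \<le> (L2_set w S)\<^sup>2"
  using power_decreasing[OF assms(2) L2_set_nonneg L2_set_le_1[OF assms(1)]] .

lemma L2_set_power2:
  "(L2_set w S)\<^sup>2 = (\<Sum>k\<in>S. (w k)\<^sup>2)"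
  by (simp add: L2_set_def sum_nonneg)

lemma unit_vector_L2_set_01_iff:
  fixes w :: "'a::finite \<Rightarrow> real"
  assumes "(\<Sum>k\<in>UNIV. (w k)\<^sup>2) = 1"
  shows "(\<forall>S. L2_set w S \<in> {0, 1}) \<longleftrightarrow> (\<forall>k. \<bar>w k\<bar> \<in> {0, 1})"
proof
  assume "\<forall>S. L2_set w S \<in> {0, 1}"
  then show "\<forall>k. \<bar>w k\<bar> \<in> {0, 1}"
    by (metis L2_set_insert L2_set_empty finite.emptyI empty_iff power_zero_numeral
        add.right_neutral real_sqrt_abs)
next
  assume w01: "\<forall>k. \<bar>w k\<bar> \<in> {0, 1}"
  show "\<forall>S. L2_set w S \<in> {0, 1}"
  proof
    fix S
    show "L2_set w S \<in> {0, 1}"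
    proof (cases "\<exists>k\<in>S. w k \<noteq> 0")
      case True
      then obtain k where "k \<in> S" "(w k)\<^sup>2 = 1"
        using w01 by (metis abs_eq_0 insert_iff one_power2 power2_abs singletonD)
      then have "1 \<le> (L2_set w S)\<^sup>2"
        unfolding L2_set_power2 by (metis finite member_le_sum zero_le_power2)
      then show ?thesis
        using L2_set_le_1[OF assms, of S] power2_le_imp_le[of 1 "L2_set w S"] by simp
    next
      case False
      then show ?thesis by (simp add: L2_set_0')
    qed
  qed
qed

lemma sparse_moment_gap:
  fixes w :: "'a::finite \<Rightarrow> real"
  assumes "(\<Sum>k\<in>UNIV. (w k)\<^sup>2) = 1"
  shows "\<theta> - sparse_moment \<theta> p w
       = (\<Sum>S\<in>Pow UNIV. support_weight \<theta> (1 - \<theta>) UNIV S * ((L2_set w S)\<^sup>2 - L2_set w S ^ p))"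
  using sum_support_weight_mult_sum[of "UNIV :: 'a set" \<theta> "1 - \<theta>" "\<lambda>k. (w k)\<^sup>2"] assms
  by (simp add: sparse_moment_def L2_set_power2 right_diff_distrib sum_subtractf)

lemma sparse_moment_le:
  fixes w :: "'a::finite \<Rightarrow> real"
  assumes "(\<Sum>k\<in>UNIV. (w k)\<^sup>2) = 1" "0 \<le> \<theta>" "\<theta> \<le> 1" "2 \<le> p"
  shows "sparse_moment \<theta> p w \<le> \<theta>"
proof -
  have "0 \<le> \<theta> - sparse_moment \<theta> p w"
    unfolding sparse_moment_gap[OF assms(1)]
    using assms L2_set_power_le_power2[OF assms(1,4)]
    by (intro sum_nonneg mult_nonneg_nonneg support_weight_nonneg) auto
  then show ?thesis by simp
qed

lemma sparse_moment_eq_iff: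
  fixes w :: "'a::finite \<Rightarrow> real"
  assumes "(\<Sum>k\<in>UNIV. (w k)\<^sup>2) = 1" "0 < \<theta>" "\<theta> < 1" "2 < p"
  shows "sparse_moment \<theta> p w = \<theta> \<longleftrightarrow> (\<forall>k. \<bar>w k\<bar> \<in> {0, 1})"
proof -
  have gap_nonneg: "0 \<le> (L2_set w S)\<^sup>2 - L2_set w S ^ p" for S
    using assms L2_set_power_le_power2[OF assms(1), of p S] by simp
  have "sparse_moment \<theta> p w = \<theta> \<longleftrightarrow> \<theta> - sparse_moment \<theta> p w = 0"
    by linarith
  also have "\<dots> \<longleftrightarrow> (\<forall>S\<in>Pow UNIV. support_weight \<theta> (1 - \<theta>) UNIV S * ((L2_set w S)\<^sup>2 - L2_set w S ^ p) = 0)"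
    unfolding sparse_moment_gap[OF assms(1)] using assms gap_nonneg
    by (intro sum_nonneg_eq_0_iff) (auto intro!: mult_nonneg_nonneg support_weight_nonneg)
  also have "\<dots> \<longleftrightarrow> (\<forall>S. (L2_set w S)\<^sup>2 - L2_set w S ^ p = 0)"
    using support_weight_pos[of \<theta> "1 - \<theta>" UNIV] assms by (metis Pow_UNIV UNIV_I diff_gt_0_iff_gt
        mult_eq_0_iff order_less_irrefl)
  also have "\<dots> \<longleftrightarrow> (\<forall>S. L2_set w S \<in> {0, 1})"
  proof -
    have "(L2_set w S)\<^sup>2 - L2_set w S ^ p = 0 \<longleftrightarrow> L2_set w S \<in> {0, 1}" for S
      unfolding right_minus_eq eq_commute[of "(L2_set w S)\<^sup>2"]
      using power_eq_power2_iff[OF L2_set_nonneg L2_set_le_1[OF assms(1)] assms(4)] by simp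
    then show ?thesis by blast
  qed
  also have "\<dots> \<longleftrightarrow> (\<forall>k. \<bar>w k\<bar> \<in> {0, 1})"
    by (rule unit_vector_L2_set_01_iff[OF assms(1)])
  finally show ?thesis .
qed

definition entry_coeffs :: "real^'n::finite^'m \<Rightarrow> 'm \<Rightarrow> 'r \<Rightarrow> ('n \<times> 'r::finite \<Rightarrow> real)" where
  "entry_coeffs W i j = (\<lambda>(k, l). if l = j then W $ i $ k else 0)"

lemma matrix_mult_to_mat_nth:
  "(W ** to_mat x) $ i $ j = (\<Sum>q\<in>UNIV. entry_coeffs W i j q * x q)"
proof -
  have "(if l = j then a else 0) * b = (if l = j then a * b else 0)" for l and a b :: real
    by simp
  then show ?thesis
    by (simp add: matrix_matrix_mult_def to_mat_def entry_coeffs_def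
        sum.cartesian_product'[of _ UNIV UNIV, unfolded UNIV_Times_UNIV])
qed

lemma sum_entry_coeffs_power2:
  "(\<Sum>q\<in>UNIV. (entry_coeffs W i j q)\<^sup>2) = (\<Sum>k\<in>UNIV. (W $ i $ k)\<^sup>2)"
proof -
  have "(if l = j then a else 0)\<^sup>2 = (if l = j then a\<^sup>2 else 0)" for l and a :: real
    by simp
  then show ?thesis
    by (simp add: entry_coeffs_def sum.cartesian_product'[of _ UNIV UNIV, unfolded UNIV_Times_UNIV])
qed

lemma entry_coeffs_01_iff:
  "(\<forall>q. \<bar>entry_coeffs W i j q\<bar> \<in> {0, 1}) \<longleftrightarrow> (\<forall>k. \<bar>W $ i $ k\<bar> \<in> {0, 1})"
  by (auto simp: entry_coeffs_def split: if_splits)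

lemma objective_eq:
  fixes D0 A :: "real^'n::finite^'n"
  assumes "0 \<le> \<theta>" "\<theta> \<le> 1"
  shows "objective p \<theta> D0 A TYPE('r::finite)
       = gauss_abs_moment p * (\<Sum>i\<in>UNIV. \<Sum>j\<in>(UNIV::'r set). sparse_moment \<theta> p (entry_coeffs (A ** D0) i j))"
proof -
  let ?c = "entry_coeffs (A ** D0) :: 'n \<Rightarrow> 'r \<Rightarrow> 'n \<times> 'r \<Rightarrow> real"
  let ?F = "\<lambda>i j (X :: 'n \<times> 'r \<Rightarrow> real). \<bar>\<Sum>q\<in>UNIV. ?c i j q * X q\<bar> ^ p"
  let ?M = "BG_matrix \<theta> :: ('n \<times> 'r \<Rightarrow> real) measure"
  have nonneg: "0 \<le> gauss_abs_moment p * sparse_moment \<theta> p w" for w :: "'n \<times> 'r \<Rightarrow> real"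
    by (intro mult_nonneg_nonneg less_imp_le[OF gauss_abs_moment_pos] sparse_moment_nonneg[OF assms])
  have "objective p \<theta> D0 A TYPE('r) = (\<integral>X. (\<Sum>i\<in>UNIV. \<Sum>j\<in>UNIV. ?F i j X) \<partial>?M)"
    by (simp add: objective_def entry_pnorm_pow_def matrix_mul_assoc matrix_mult_to_mat_nth)
  also have "\<dots> = enn2real (\<integral>\<^sup>+X. (\<Sum>i\<in>UNIV. \<Sum>j\<in>UNIV. ennreal (?F i j X)) \<partial>?M)"
    by (subst integral_eq_nn_integral) (auto simp: BG_matrix_def sum_nonneg sum_ennreal)
  also have "\<dots> = enn2real (\<Sum>i\<in>UNIV. \<Sum>j\<in>UNIV. \<integral>\<^sup>+X. ennreal (?F i j X) \<partial>?M)"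
  proof -
    have [measurable]: "(\<lambda>X. ennreal (?F i j X)) \<in> borel_measurable ?M" for i j
      unfolding BG_matrix_def by measurable
    have inner: "(\<integral>\<^sup>+X. (\<Sum>j\<in>UNIV. ennreal (?F i j X)) \<partial>?M) = (\<Sum>j\<in>UNIV. \<integral>\<^sup>+X. ennreal (?F i j X) \<partial>?M)"
      for i by (rule nn_integral_sum) measurable
    show ?thesis by (subst nn_integral_sum) (measurable, simp only: inner)
  qed
  also have "\<dots> = enn2real (\<Sum>i\<in>UNIV. \<Sum>j\<in>UNIV. ennreal (gauss_abs_moment p * sparse_moment \<theta> p (?c i j)))"
    unfolding BG_matrix_def by (simp only: nn_integral_BG_abs_power[OF assms])
  also have "\<dots> = (\<Sum>i\<in>UNIV. \<Sum>j\<in>(UNIV::'r set). gauss_abs_moment p * sparse_moment \<theta> p (?c i j))"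
    using nonneg by (simp add: sum_ennreal sum_nonneg)
  finally show ?thesis by (simp add: sum_distrib_left)
qed

lemma orthogonal_matrix_row_sum_power2:
  fixes W :: "real^'n::finite^'n"
  assumes "orthogonal_matrix W"
  shows "(\<Sum>k\<in>UNIV. (W $ i $ k)\<^sup>2) = 1"
proof -
  have "(W ** transpose W) $ i $ i = 1"
    using assms by (simp add: orthogonal_matrix_def mat_def)
  then show ?thesis by (simp add: matrix_matrix_mult_def transpose_def power2_eq_square)
qed

lemma orthogonal_matrix_column_sum_power2:
  fixes W :: "real^'n::finite^'n"
  assumes "orthogonal_matrix W"
  shows "(\<Sum>i\<in>UNIV. (W $ i $ k)\<^sup>2) = 1"
  using orthogonal_matrix_row_sum_power2[of "transpose W" k] assms
  unfolding orthogonal_matrix_transpose by (simp add: transpose_def)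

lemma orthogonal_matrix_mult_right_iff:
  fixes A D :: "real^'n::finite^'n"
  assumes "orthogonal_matrix D"
  shows "orthogonal_matrix (A ** D) \<longleftrightarrow> orthogonal_matrix A"
proof
  assume "orthogonal_matrix (A ** D)"
  moreover have "A = (A ** D) ** transpose D"
    using assms by (simp add: orthogonal_matrix_def matrix_mul_assoc[symmetric])
  ultimately show "orthogonal_matrix A"
    using assms by (metis orthogonal_matrix_mul orthogonal_matrix_transpose)
qed (use assms orthogonal_matrix_mul in blast)

lemma objective_le:
  fixes D0 A :: "real^'n::finite^'n"
  assumes "orthogonal_matrix (A ** D0)" "0 \<le> \<theta>" "\<theta> \<le> 1" "2 \<le> p"
  shows "objective p \<theta> D0 A TYPE('r::finite) \<le> gauss_abs_moment p * (real (CARD('n) * CARD('r)) * \<theta>)"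
proof -
  have "sparse_moment \<theta> p (entry_coeffs (A ** D0) i j) \<le> \<theta>" for i and j :: 'r
    using assms by (intro sparse_moment_le)
      (simp_all add: sum_entry_coeffs_power2 orthogonal_matrix_row_sum_power2)
  then have "(\<Sum>i\<in>UNIV. \<Sum>j\<in>(UNIV::'r set). sparse_moment \<theta> p (entry_coeffs (A ** D0) i j))
      \<le> (\<Sum>i\<in>(UNIV::'n set). \<Sum>j\<in>(UNIV::'r set). \<theta>)"
    by (intro sum_mono)
  then show ?thesis
    using assms gauss_abs_moment_pos[of p] by (simp add: objective_eq mult_ac)
qed

lemma objective_eq_max_iff:
  fixes D0 A :: "real^'n::finite^'n"
  assumes "orthogonal_matrix (A ** D0)" "0 < \<theta>" "\<theta> < 1" "2 < p"
  shows "objective p \<theta> D0 A TYPE('r::finite) = gauss_abs_moment p * (real (CARD('n) * CARD('r)) * \<theta>)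
     \<longleftrightarrow> (\<forall>i k. \<bar>(A ** D0) $ i $ k\<bar> \<in> {0, 1})"
proof -
  let ?gap = "\<lambda>i j. \<theta> - sparse_moment \<theta> p (entry_coeffs (A ** D0) i j :: 'n \<times> 'r \<Rightarrow> real)"
  have unit: "(\<Sum>q\<in>UNIV. (entry_coeffs (A ** D0) i j q)\<^sup>2) = 1" for i j
    using assms(1) by (simp add: sum_entry_coeffs_power2 orthogonal_matrix_row_sum_power2)
  have gap_nonneg: "0 \<le> ?gap i j" for i j
    using sparse_moment_le[OF unit, of \<theta> p] assms by simp
  have "objective p \<theta> D0 A TYPE('r) = gauss_abs_moment p * (real (CARD('n) * CARD('r)) * \<theta>)
      \<longleftrightarrow> (\<Sum>i\<in>UNIV. \<Sum>j\<in>UNIV. ?gap i j) = 0"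
    using assms gauss_abs_moment_pos[of p]
    by (simp add: objective_eq sum_subtractf right_diff_distrib mult_ac) (rule eq_commute)
  also have "\<dots> \<longleftrightarrow> (\<forall>i j. ?gap i j = 0)"
    using gap_nonneg by (simp add: sum_nonneg_eq_0_iff sum_nonneg)
  also have "\<dots> \<longleftrightarrow> (\<forall>i (j::'r) q. \<bar>entry_coeffs (A ** D0) i j q\<bar> \<in> {0, 1})"
    using assms by (simp only: right_minus_eq eq_commute[of \<theta>] sparse_moment_eq_iff[OF unit])
  also have "\<dots> \<longleftrightarrow> (\<forall>i k. \<bar>(A ** D0) $ i $ k\<bar> \<in> {0, 1})"
    by (simp only: entry_coeffs_01_iff) simp
  finally show ?thesis .
qed

lemma objective_maximizer_iff:
  fixes D0 A :: "real^'n::finite^'n"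
  assumes "2 < p" "0 < \<theta>" "\<theta> < 1" "orthogonal_matrix D0"
  shows "(orthogonal_matrix A \<and> (\<forall>B. orthogonal_matrix B \<longrightarrow>
            objective p \<theta> D0 B TYPE('r::finite) \<le> objective p \<theta> D0 A TYPE('r)))
     \<longleftrightarrow> orthogonal_matrix (A ** D0) \<and> (\<forall>i k. \<bar>(A ** D0) $ i $ k\<bar> \<in> {0, 1})"
proof -
  let ?obj = "\<lambda>B. objective p \<theta> D0 B TYPE('r)"
  let ?max = "gauss_abs_moment p * (real (CARD('n) * CARD('r)) * \<theta>)"
  have orth_iff: "orthogonal_matrix (B ** D0) \<longleftrightarrow> orthogonal_matrix B" for B
    by (rule orthogonal_matrix_mult_right_iff[OF assms(4)])
  have bounded: "?obj B \<le> ?max" if "orthogonal_matrix B" for B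
    using assms that by (intro objective_le) (simp_all add: orth_iff)
  have "\<forall>i k. \<bar>(mat 1 :: real^'n^'n) $ i $ k\<bar> \<in> {0, 1}"
    by (simp add: mat_def)
  then have attained: "?obj (transpose D0) = ?max"
    using assms by (subst objective_eq_max_iff) (simp_all add: orthogonal_matrix_def orthogonal_matrix_id)
  have "(orthogonal_matrix A \<and> (\<forall>B. orthogonal_matrix B \<longrightarrow> ?obj B \<le> ?obj A))
      \<longleftrightarrow> orthogonal_matrix (A ** D0) \<and> ?obj A = ?max"
  proof
    assume A: "orthogonal_matrix A \<and> (\<forall>B. orthogonal_matrix B \<longrightarrow> ?obj B \<le> ?obj A)"
    then have "?max \<le> ?obj A"
      using attained assms(4) by (metis orthogonal_matrix_transpose)
    with A show "orthogonal_matrix (A ** D0) \<and> ?obj A = ?max"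
      using bounded orth_iff by (auto intro: order.antisym)
  qed (use bounded orth_iff in auto)
  also have "\<dots> \<longleftrightarrow> orthogonal_matrix (A ** D0) \<and> (\<forall>i k. \<bar>(A ** D0) $ i $ k\<bar> \<in> {0, 1})"
    using assms objective_eq_max_iff by blast
  finally show ?thesis .
qed

lemma unit_01_vector_support_unique:
  fixes f :: "'a::finite \<Rightarrow> real"
  assumes "(\<Sum>k\<in>UNIV. (f k)\<^sup>2) = 1" "\<forall>k. \<bar>f k\<bar> \<in> {0, 1}" "f a \<noteq> 0" "f b \<noteq> 0"
  shows "a = b"
proof (rule ccontr)
  assume "a \<noteq> b"
  have "(f k)\<^sup>2 = 1" if "f k \<noteq> 0" for k
    using assms(2) that by (metis abs_eq_0 insert_iff one_power2 power2_abs singletonD)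
  then have "(\<Sum>k\<in>{a, b}. (f k)\<^sup>2) = 2"
    using \<open>a \<noteq> b\<close> assms(3,4) by simp
  moreover have "(\<Sum>k\<in>{a, b}. (f k)\<^sup>2) \<le> (\<Sum>k\<in>UNIV. (f k)\<^sup>2)"
    by (rule sum_mono2) auto
  ultimately show False using assms(1) by simp
qed

lemma orthogonal_matrix_signed_perm:
  fixes P :: "real^'n::finite^'n"
  assumes "P \<in> signed_perm_matrices"
  shows "orthogonal_matrix P"
proof -
  obtain \<sigma> s where \<sigma>: "\<sigma> permutes (UNIV :: 'n set)" and s: "\<forall>j. s j = 1 \<or> s j = -1"
    and P: "P = (\<chi> i j. if i = \<sigma> j then s j else 0)"
    using assms unfolding signed_perm_matrices_def by blast
  have "(transpose P ** P) $ a $ b = (if a = b then 1 else 0)" for a b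
  proof -
    have "(transpose P ** P) $ a $ b = (\<Sum>k\<in>UNIV. if k = \<sigma> a then s a * (if k = \<sigma> b then s b else 0) else 0)"
      unfolding P by (simp add: matrix_matrix_mult_def transpose_def if_distrib[of "\<lambda>u. u * _"]
          cong: if_cong)
    also have "\<dots> = (if a = b then 1 else 0)"
      using permutes_inj[OF \<sigma>] s by (auto simp: inj_eq) (metis mult_1 mult_minus1 minus_minus)
    finally show ?thesis .
  qed
  then show ?thesis by (simp add: orthogonal_matrix vec_eq_iff mat_def)
qed

lemma signed_perm_matricesI:
  fixes P :: "real^'n::finite^'n"
  assumes orth: "orthogonal_matrix P" and entries: "\<forall>i j. \<bar>P $ i $ j\<bar> \<in> {0, 1}"
  shows "P \<in> signed_perm_matrices"
proof -
  have column_unique: "i = i'" if "P $ i $ j \<noteq> 0" "P $ i' $ j \<noteq> 0" for i i' j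
    using unit_01_vector_support_unique[of "\<lambda>i. P $ i $ j"] that entries
      orthogonal_matrix_column_sum_power2[OF orth] by blast
  have row_unique: "j = j'" if "P $ i $ j \<noteq> 0" "P $ i $ j' \<noteq> 0" for i j j'
    using unit_01_vector_support_unique[of "\<lambda>j. P $ i $ j"] that entries
      orthogonal_matrix_row_sum_power2[OF orth] by blast
  have "\<exists>i. P $ i $ j \<noteq> 0" for j
    using orthogonal_matrix_column_sum_power2[OF orth, of j] by (rule contrapos_pp) simp
  then obtain \<sigma> where \<sigma>: "\<And>j. P $ \<sigma> j $ j \<noteq> 0" by metis
  have "inj \<sigma>"
    by (rule injI) (metis \<sigma> row_unique)
  then have "\<sigma> permutes (UNIV :: 'n set)"
    by (rule inj_imp_permutes) simp_all
  moreover have "\<forall>j. P $ \<sigma> j $ j = 1 \<or> P $ \<sigma> j $ j = -1"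
    using entries \<sigma> by (metis abs_eq_0 abs_minus_cancel abs_one insert_iff abs_eq_iff singletonD)
  moreover have "P = (\<chi> i j. if i = \<sigma> j then P $ \<sigma> j $ j else 0)"
    using column_unique \<sigma> by (auto simp: vec_eq_iff)
  ultimately show ?thesis
    unfolding signed_perm_matrices_def mem_Collect_eq by (intro exI conjI) assumption+
qed

lemma signed_perm_matrices_iff:
  fixes P :: "real^'n::finite^'n"
  shows "P \<in> signed_perm_matrices \<longleftrightarrow> orthogonal_matrix P \<and> (\<forall>i j. \<bar>P $ i $ j\<bar> \<in> {0, 1})"
proof (intro iffI conjI)
  assume "P \<in> signed_perm_matrices"
  then show "orthogonal_matrix P" by (rule orthogonal_matrix_signed_perm)
  from \<open>P \<in> signed_perm_matrices\<close> obtain \<sigma> s where s: "\<forall>j. s j = 1 \<or> s j = -1"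
    and P: "P = (\<chi> i j. if i = \<sigma> j then s j else 0)"
    unfolding signed_perm_matrices_def by blast
  have "\<bar>s j\<bar> = 1" for j
    using s[rule_format, of j] by auto
  then show "\<forall>i j. \<bar>P $ i $ j\<bar> \<in> {0, 1}"
    unfolding P by simp
qed (use signed_perm_matricesI in blast)

lemma transpose_eq_mult_iff:
  fixes A D P :: "real^'n::finite^'n"
  assumes "orthogonal_matrix D"
  shows "transpose A = D ** P \<longleftrightarrow> P = transpose (A ** D)"
  using assms unfolding orthogonal_matrix_def
  by (metis matrix_mul_assoc matrix_mul_lid matrix_transpose_mul)

theorem lemma1:
  fixes p :: nat and \<theta> :: real and D0 :: "real^'n::finite^'n"
  assumes "p > 2" and "0 < \<theta>" and "\<theta> < 1" and "orthogonal_matrix D0"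
  shows "{A. orthogonal_matrix A \<and>
             (\<forall>B. orthogonal_matrix B \<longrightarrow>
                  objective p \<theta> D0 B TYPE('r::finite) \<le> objective p \<theta> D0 A TYPE('r))}
         = {A. \<exists>P\<in>signed_perm_matrices. transpose A = D0 ** P}"
proof -
  have "(orthogonal_matrix A \<and> (\<forall>B. orthogonal_matrix B \<longrightarrow>
            objective p \<theta> D0 B TYPE('r) \<le> objective p \<theta> D0 A TYPE('r)))
      \<longleftrightarrow> (\<exists>P\<in>signed_perm_matrices. transpose A = D0 ** P)" for A
  proof -
    have "(orthogonal_matrix A \<and> (\<forall>B. orthogonal_matrix B \<longrightarrow>
            objective p \<theta> D0 B TYPE('r) \<le> objective p \<theta> D0 A TYPE('r)))
        \<longleftrightarrow> orthogonal_matrix (A ** D0) \<and> (\<forall>i k. \<bar>(A ** D0) $ i $ k\<bar> \<in> {0, 1})"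
      by (rule objective_maximizer_iff[OF assms])
    also have "\<dots> \<longleftrightarrow> transpose (A ** D0) \<in> signed_perm_matrices"
      unfolding signed_perm_matrices_iff orthogonal_matrix_transpose by (auto simp: transpose_def)
    also have "\<dots> \<longleftrightarrow> (\<exists>P\<in>signed_perm_matrices. transpose A = D0 ** P)"
      using transpose_eq_mult_iff[OF assms(4)] by auto
    finally show ?thesis .
  qed
  then show ?thesis by blast
qed

end
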